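(* Let $K$ be a field of characteristic $0$, let $a,r\in K$ with $a\neq 0$ and $r\notin\{-1,1,1-a,-1-a\}$, and put \[ b=\frac{r^2-1}{a},\qquad c=a+b+2r. \] Assume that $ab$, $bc$, $ac$ are pairwise distinct, so that \[ E':\ y^2=(x+ab)(x+bc)(x+ac) \] is an elliptic curve over $K$, and let $P=[0,abc]\in E'(K)$. Then $5P=\mathcal{O}$ if and only if \begin{align*} &(-4 r^2 + 4 r^4)a^4 + (4 r - 20 r^3 + 16 r^5) a^3 + ( -1 + 16 r^2 - 40 r^4 + 24 r^6)a^2\\ &\quad + (-4 r + 24 r^3 - 36 r^5 + 16 r^7)a -4 r^2 + 12 r^4 - 12 r^6 + 4 r^8=0. \end{align*}
   Context: With these definitions $ab+1=r^2$, $ac+1=(a+r)^2$ and $bc+1$ is also a square, so $\{a,b,c\}$ is a Diophantine triple. $\mathcal{O}$ denotes the point at infinity (neutral element) of $E'$. *)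

theory Defs
  imports Main
begin

text \<open>Points of the elliptic curve y^2 = x^3 + a2 x^2 + a4 x + a6 over a field:
  None is the point at infinity O, Some (x,y) an affine point.
  ec_add is the usual chord-and-tangent group law.\<close>

type_synonym 'a ecpt = "('a \<times> 'a) option"

definition on_curve :: "'a::field \<Rightarrow> 'a \<Rightarrow> 'a \<Rightarrow> 'a ecpt \<Rightarrow> bool" where
  "on_curve a2 a4 a6 P = (case P of None \<Rightarrow> True
     | Some (x, y) \<Rightarrow> y^2 = x^3 + a2 * x^2 + a4 * x + a6)"

definition ec_add :: "'a::field \<Rightarrow> 'a \<Rightarrow> 'a \<Rightarrow> 'a ecpt \<Rightarrow> 'a ecpt \<Rightarrow> 'a ecpt" where
  "ec_add a2 a4 a6 P Q = (case P of None \<Rightarrow> Q | Some (x1, y1) \<Rightarrow>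
     (case Q of None \<Rightarrow> P | Some (x2, y2) \<Rightarrow>
       (if x1 = x2 \<and> y1 = - y2 then None
        else let l = (if x1 = x2 then (3 * x1^2 + 2 * a2 * x1 + a4) / (2 * y1)
                      else (y2 - y1) / (x2 - x1));
                 x3 = l^2 - a2 - x1 - x2;
                 y3 = l * (x1 - x3) - y1
             in Some (x3, y3))))"

fun ec_mul :: "'a::field \<Rightarrow> 'a \<Rightarrow> 'a \<Rightarrow> nat \<Rightarrow> 'a ecpt \<Rightarrow> 'a ecpt" where
  "ec_mul a2 a4 a6 0 P = None"
| "ec_mul a2 a4 a6 (Suc n) P = ec_add a2 a4 a6 P (ec_mul a2 a4 a6 n P)"

end

theory Submission
  imports Defs
begin

text \<open>With s = a + b + r and k = abc the curve becomes
  y^2 = x^3 + (s^2 - 1) x^2 + 2ks x + k^2,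
  i.e. y^2 - (sx + k)^2 = x^3 - x^2. So the line y = sx + k is tangent at P = (0, k) and
  meets the curve again at x = 1, giving 2P = (1, -s - k) and then x(3P) = 4k(s + k).
  Now 5P = O iff 4P = -P, and x(4P) = (1 - x(3P)) / (4 (s + k)^2) vanishes iff
  4k(s + k) = 1; multiplied by a^2 and expressed in a and r this is the stated polynomial.\<close>

lemma ec_add_Some_Some_eq_None_iff:
  "ec_add a2 a4 a6 (Some (x1, y1)) (Some (x2, y2)) = None \<longleftrightarrow> x1 = x2 \<and> y1 = - y2"
  by (simp add: ec_add_def Let_def)

lemma ec_add_Some_None [simp]: "ec_add a2 a4 a6 (Some p) None = Some p"
  by (simp add: ec_add_def split: prod.split)

lemma ec_double_tangent_point:
  fixes s k :: "'a::field_char_0"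
  assumes "k \<noteq> 0"
  shows "ec_add (s^2 - 1) (2*k*s) (k^2) (Some (0, k)) (Some (0, k)) = Some (1, -s - k)"
proof -
  have "k \<noteq> - k" using assms by simp
  then show ?thesis using assms by (simp add: ec_add_def Let_def power2_eq_square)
qed

lemma ec_triple_tangent_point:
  fixes s k :: "'a::field_char_0"
  assumes "k \<noteq> 0"
  defines "u \<equiv> 4*k*(s + k)"
  shows "ec_mul (s^2 - 1) (2*k*s) (k^2) 3 (Some (0, k)) = Some (u, (s + 2*k)*u - k)"
proof -
  have "ec_mul (s^2 - 1) (2*k*s) (k^2) 2 (Some (0, k)) = Some (1, -s - k)"
    using ec_double_tangent_point[OF assms(1)] by (simp add: numeral_2_eq_2)
  then show ?thesis
    by (simp add: numeral_3_eq_3 numeral_2_eq_2 ec_add_def Let_def power2_eq_square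
        algebra_simps u_def)
qed

lemma ec_order_5_tangent_point_iff:
  fixes s k :: "'a::field_char_0"
  assumes k: "k \<noteq> 0"
  shows "ec_mul (s^2 - 1) (2*k*s) (k^2) 5 (Some (0, k)) = None \<longleftrightarrow> 4*k*(s + k) = 1"
proof -
  let ?add = "ec_add (s^2 - 1) (2*k*s) (k^2)"
  define u where "u = 4*k*(s + k)"
  have P3: "ec_mul (s^2 - 1) (2*k*s) (k^2) 3 (Some (0, k)) = Some (u, (s + 2*k)*u - k)"
    using ec_triple_tangent_point[OF k] by (simp add: u_def)
  have P5: "ec_mul (s^2 - 1) (2*k*s) (k^2) 5 (Some (0, k))
      = ?add (Some (0, k)) (?add (Some (0, k)) (Some (u, (s + 2*k)*u - k)))"
  proof -
    have "ec_mul (s^2 - 1) (2*k*s) (k^2) 5 (Some (0, k))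
        = ?add (Some (0, k)) (?add (Some (0, k)) (ec_mul (s^2 - 1) (2*k*s) (k^2) 3 (Some (0, k))))"
      by (simp add: eval_nat_numeral)
    then show ?thesis by (simp only: P3)
  qed
  show ?thesis
  proof (cases "u = 0")
    case True
    then show ?thesis
      using P5 by (simp add: ec_add_def u_def[symmetric])
  next
    case False
    define l where "l = ((s + 2*k)*u - k - k) / u"
    define x4 where "x4 = l^2 - (s^2 - 1) - u"
    have P4: "?add (Some (0, k)) (Some (u, (s + 2*k)*u - k)) = Some (x4, l * (0 - x4) - k)"
      using False
      by (simp add: ec_add_def Let_def l_def x4_def) (simp add: algebra_simps minus_divide_left)
    have "s + k \<noteq> 0" using False u_def by auto
    then have x4: "x4 = (1 - u) / (4*(s + k)^2)"
      unfolding x4_def l_def using False k unfolding u_def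
      by (simp add: field_simps) (simp add: algebra_simps power2_eq_square)
    \<comment> \<open>P + Q = O forces Q = -P = (0, -k); the y-coordinate matches automatically once x4 = 0.\<close>
    have "ec_mul (s^2 - 1) (2*k*s) (k^2) 5 (Some (0, k)) = None \<longleftrightarrow> x4 = 0"
      unfolding P5 P4 ec_add_Some_Some_eq_None_iff by auto
    also have "\<dots> \<longleftrightarrow> u = 1" using \<open>s + k \<noteq> 0\<close> by (simp add: x4)
    finally show ?thesis by (simp add: u_def)
  qed
qed

lemma diophantine_triple_curve_normal_form:
  fixes a r b c :: "'a::field"
  assumes "a \<noteq> 0" and "b = (r^2 - 1) / a" and "c = a + b + 2*r"
  defines "s \<equiv> a + b + r" and "k \<equiv> a*b*c"
  shows "a*b + b*c + a*c = s^2 - 1"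
    and "a*b*(b*c) + a*b*(a*c) + b*c*(a*c) = 2*k*s"
    and "a*b*(b*c)*(a*c) = k^2"
proof -
  have "a*b = r^2 - 1" using assms(1,2) by simp
  then show "a*b + b*c + a*c = s^2 - 1"
    using assms(3) by (simp add: s_def algebra_simps power2_eq_square)
  show "a*b*(b*c) + a*b*(a*c) + b*c*(a*c) = 2*k*s"
    using assms(3) by (simp add: s_def k_def algebra_simps)
  show "a*b*(b*c)*(a*c) = k^2"
    by (simp add: k_def algebra_simps power2_eq_square)
qed

lemma diophantine_triple_product_nonzero:
  fixes a r b c :: "'a::field"
  assumes "a \<noteq> 0" and "r \<notin> {-1, 1, 1 - a, -1 - a}"
    and "b = (r^2 - 1) / a" and "c = a + b + 2*r"
  shows "a*b*c \<noteq> 0"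
proof -
  have ab: "a*b = r^2 - 1" using assms(1,3) by simp
  have "a*c = (a + r)^2 - 1"
    using ab assms(4) by (simp add: algebra_simps power2_eq_square)
  moreover have "r \<noteq> 1" "r \<noteq> -1" "a + r \<noteq> 1" "a + r \<noteq> -1"
    using assms(2) by (auto simp: algebra_simps)
  ultimately have "a*b \<noteq> 0" "a*c \<noteq> 0"
    by (simp_all add: ab power2_eq_1_iff)
  then show ?thesis using assms(1) by simp
qed

lemma order_5_polynomial_eq:
  fixes a r b c :: "'a::field"
  assumes "a \<noteq> 0" and "b = (r^2 - 1) / a" and "c = a + b + 2*r"
  shows "(-4*r^2 + 4*r^4)*a^4 + (4*r - 20*r^3 + 16*r^5)*a^3
         + (-1 + 16*r^2 - 40*r^4 + 24*r^6)*a^2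
         + (-4*r + 24*r^3 - 36*r^5 + 16*r^7)*a
         - 4*r^2 + 12*r^4 - 12*r^6 + 4*r^8
       = a^2 * (4*(a*b*c)*((a + b + r) + a*b*c) - 1)"
  unfolding assms(2,3) using assms(1)
  by (simp add: field_simps) (simp add: algebra_simps power2_eq_square power3_eq_cube eval_nat_numeral)

theorem lemma1:
  fixes a r b c :: "'a::field_char_0"
  assumes "a \<noteq> 0"
    and "r \<notin> {-1, 1, 1 - a, -1 - a}"
    and "b = (r^2 - 1) / a"
    and "c = a + b + 2 * r"
    and "a * b \<noteq> b * c" and "a * b \<noteq> a * c" and "b * c \<noteq> a * c"
  shows "ec_mul (a*b + b*c + a*c) (a*b*(b*c) + a*b*(a*c) + b*c*(a*c)) (a*b*(b*c)*(a*c))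
            5 (Some (0, a*b*c)) = None
     \<longleftrightarrow> (-4*r^2 + 4*r^4)*a^4 + (4*r - 20*r^3 + 16*r^5)*a^3
         + (-1 + 16*r^2 - 40*r^4 + 24*r^6)*a^2
         + (-4*r + 24*r^3 - 36*r^5 + 16*r^7)*a
         - 4*r^2 + 12*r^4 - 12*r^6 + 4*r^8 = 0"
proof -
  have k: "a*b*c \<noteq> 0"
    using diophantine_triple_product_nonzero[OF assms(1-4)] .
  note curve = diophantine_triple_curve_normal_form[OF assms(1,3,4)]
  show ?thesis
    unfolding curve order_5_polynomial_eq[OF assms(1,3,4)] ec_order_5_tangent_point_iff[OF k]
    using assms(1) by simp
qed

end
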